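(* Let $L, L_1, M, M_1$ be linear partial differential operators in $\mathbb{R}^n$ (coefficients in $\mathbf{F}$) satisfying $M_1L = L_1M$. Put $X_2 = M$ and $\omega = M_1 - M$. If there exists a differential operator $X_1$ satisfying $[X_1,X_2] - \omega X_1 = L - L_1$, then $L$ and $L_1$ are connected by an Intertwining Laplace Transformation: with $H = X_1X_2 - L$ one has $L = X_1X_2 - H$, $[H,X_2] = \omega H$ (so $\omega = -[X_2,H]H^{-1}$ when $H\ne0$, and $\omega$ is a differential operator), and $L_1 = X_2X_1 + \omega X_1 - H$.
   Context: $\mathbf{F}$ is a differential field of functions of $x_1,\ldots,x_n$; operators lie in $\mathbf{F}[D_{x_1},\ldots,D_{x_n}]$; $[A,B]=AB-BA$; $H^{-1}$ is taken in the skew Ore field of fractions of this ring. Operators $L, L_1$ are connected by an Intertwining Laplace Transformation if $L = X_1X_2 - H$, $L_1 = X_2X_1+\omega X_1 - H$ with $\omega=-[X_2,H]H^{-1}$ a differential operator. *)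

theory Defs
  imports Main
begin

(* The ring F[D_x1,...,D_xn] of linear partial differential operators is modelled
   abstractly as an arbitrary (not necessarily commutative) ring with unit. *)

definition commutator :: "'a::ring \<Rightarrow> 'a \<Rightarrow> 'a" where
  "commutator A B = A * B - B * A"

(* An injective unital ring homomorphism into a division ring; the embedding of an
   Ore domain into its skew field of fractions is such a map. *)
definition ring_embedding :: "('a::ring_1 \<Rightarrow> 'b::division_ring) \<Rightarrow> bool" where
  "ring_embedding \<phi> \<longleftrightarrow> inj \<phi> \<and> \<phi> 1 = 1 \<and>
     (\<forall>x y. \<phi> (x + y) = \<phi> x + \<phi> y) \<and> (\<forall>x y. \<phi> (x * y) = \<phi> x * \<phi> y)"

definition ILT_connected :: "'a::ring \<Rightarrow> 'a \<Rightarrow> 'a \<Rightarrow> 'a \<Rightarrow> 'a \<Rightarrow> 'a \<Rightarrow> bool" where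
  "ILT_connected L L1 X1 X2 H \<omega> \<longleftrightarrow>
     L = X1 * X2 - H \<and> L1 = X2 * X1 + \<omega> * X1 - H \<and> commutator H X2 = \<omega> * H"

end

theory Submission
  imports Defs
begin

text \<open>Eliminating L - L1 from the defining equation of X1 shows that [H, M] - \<omega> H is
  exactly the defect M1 L - L1 M of the intertwining relation, so [H, X2] = \<omega> H holds; the
  formula for \<omega> follows after embedding into a skew field, where H becomes invertible.\<close>

lemma commutator_swap: "commutator B A = - commutator A B"
  unfolding commutator_def by simp

lemma ring_embedding_zero:
  assumes "ring_embedding \<phi>"
  shows "\<phi> 0 = 0"
  using assms unfolding ring_embedding_def by (metis add_cancel_right_right add_0)

lemma ring_embedding_minus:
  assumes "ring_embedding \<phi>"
  shows "\<phi> (- x) = - \<phi> x"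
proof -
  have "\<phi> x + \<phi> (- x) = 0"
    using assms ring_embedding_zero[OF assms] unfolding ring_embedding_def
    by (metis add.right_inverse)
  then show ?thesis by (simp add: add_eq_0_iff2)
qed

lemma ring_embedding_mult:
  assumes "ring_embedding \<phi>"
  shows "\<phi> (x * y) = \<phi> x * \<phi> y"
  using assms unfolding ring_embedding_def by blast

lemma ring_embedding_nonzero:
  assumes "ring_embedding \<phi>" and "x \<noteq> 0"
  shows "\<phi> x \<noteq> 0"
  using assms ring_embedding_zero[OF assms(1)] unfolding ring_embedding_def inj_def by metis

lemma eq_minus_commutator_mult_inverse:
  fixes \<phi> :: "'a::ring_1 \<Rightarrow> 'b::division_ring"
  assumes "ring_embedding \<phi>" and "commutator H X2 = \<omega> * H" and "H \<noteq> 0"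
  shows "\<phi> \<omega> = - \<phi> (commutator X2 H) * inverse (\<phi> H)"
proof -
  have "commutator X2 H = - (\<omega> * H)"
    using assms(2) commutator_swap by metis
  then have "- \<phi> (commutator X2 H) = \<phi> \<omega> * \<phi> H"
    by (simp add: ring_embedding_minus[OF assms(1)] ring_embedding_mult[OF assms(1)])
  then show ?thesis
    using ring_embedding_nonzero[OF assms(1,3)] by (simp add: mult.assoc)
qed

lemma ILT_second_factorization:
  fixes X1 X2 \<omega> L L1 H :: "'a::ring"
  assumes "commutator X1 X2 - \<omega> * X1 = L - L1" and "H = X1 * X2 - L"
  shows "L1 = X2 * X1 + \<omega> * X1 - H"
proof -
  have "L1 = L - (commutator X1 X2 - \<omega> * X1)"
    using assms(1) by simp
  then show ?thesis
    unfolding assms(2) commutator_def by (simp add: algebra_simps)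
qed

lemma commutator_eq_mult_iff_intertwining:
  fixes L L1 M M1 X1 :: "'a::ring"
  assumes "commutator X1 M - (M1 - M) * X1 = L - L1"
  shows "commutator (X1 * M - L) M = (M1 - M) * (X1 * M - L) \<longleftrightarrow> M1 * L = L1 * M"
proof -
  have L1: "L1 = L - (commutator X1 M - (M1 - M) * X1)"
    using assms by simp
  have "commutator (X1 * M - L) M - (M1 - M) * (X1 * M - L) = M1 * L - L1 * M"
    unfolding L1 commutator_def by (simp add: algebra_simps)
  then show ?thesis by (metis eq_iff_diff_eq_0)
qed

theorem proposition1:
  fixes L L1 M M1 X1 X2 \<omega> H :: "'a::ring_1"
  assumes intertw: "M1 * L = L1 * M"
    and X2_def: "X2 = M"
    and omega_def: "\<omega> = M1 - M"
    and X1: "commutator X1 X2 - \<omega> * X1 = L - L1"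
    and H_def: "H = X1 * X2 - L"
  shows "ILT_connected L L1 X1 X2 H \<omega> \<and>
         (\<forall>\<phi> :: 'a \<Rightarrow> 'b::division_ring. ring_embedding \<phi> \<longrightarrow> H \<noteq> 0 \<longrightarrow>
            \<phi> \<omega> = - \<phi> (commutator X2 H) * inverse (\<phi> H))"
proof -
  have H_commutator: "commutator H X2 = \<omega> * H"
    using commutator_eq_mult_iff_intertwining[of X1 M M1 L L1] X1 intertw
    unfolding X2_def omega_def H_def by blast
  have "ILT_connected L L1 X1 X2 H \<omega>"
    unfolding ILT_connected_def
    using H_def ILT_second_factorization[OF X1 H_def] H_commutator by simp
  then show ?thesis
    using eq_minus_commutator_mult_inverse[OF _ H_commutator] by blast
qed

end
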